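(* Let $(G,r)$ be a symmetric group, $r(a,b)=({}^ab,a^b)$, which is not the trivial solution, and let $(G,+,\cdot)$ be its associated left brace. The following are equivalent: (1) $(G,r)$ is a multipermutation solution of level $2$; (2) $G$ acts upon itself from the left as automorphisms: ${}^a(bc)=({}^ab)({}^ac)$ for all $a,b,c\in G$; (3) at least one (equivalently, each) of the following identities holds for all $a,b\in G$: (i) $\mathcal{L}_{{}^ba}=\mathcal{L}_a$; (ii) $\mathcal{L}_{a^b}=\mathcal{L}_a$; (iii) $\mathcal{R}_{{}^ba}=\mathcal{R}_a$; (iv) $\mathcal{R}_{a^b}=\mathcal{R}_a$. Moreover, each of these conditions implies that $(G,r)$ satisfies lri and the cyclic conditions, and that the brace satisfies Raut.
   Context: A symmetric group is $(G,r)$, $G$ a group, $r(u,v)=({}^uv,u^v)$ an involutive bijection of $G\times G$ with ${}^a1=1,{}^1u=u,1^u=1,a^1=a$, ${}^{ab}u={}^a({}^bu)$, $a^{uv}=(a^u)^v$, ${}^a(uv)=({}^au)({}^{a^u}v)$, $(ab)^u=(a^{{}^bu})(b^u)$, $uv=({}^uv)(u^v)$; it is a non-degenerate involutive set-theoretic solution of the Yang–Baxter equation. $\mathcal{L}_a(b)={}^ab$, $\mathcal{R}_a(b)=b^a$. The trivial solution means $r(a,b)=(b,a)$. The associated left brace has $a+b:=a({}^{a^{-1}}b)$. lri: $({}^ab)^a=b={}^a(b^a)$ for all $a,b$. Cyclic conditions: ${}^{(b^a)}a={}^ba$, $a^{({}^ab)}=a^b$, ${}^{({}^ab)}a={}^ba$,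 $a^{(b^a)}=a^b$ for all $a,b$. Raut: $(a+b)^c=a^c+b^c$. Retraction: classes of $a\sim b$ iff $\mathcal{L}_a=\mathcal{L}_b$ with induced map; $\mathrm{mpl}=m$ iff $m$ is minimal such that the $m$-fold iterated retraction has one element. *)

theory Defs
  imports "HOL-Algebra.Group"
begin

text \<open>A symmetric group (G,r) with r(u,v) = (L u v, R u v), where L u v is the left action
  of u on v and R u v is u acted upon from the right by v.\<close>

definition symmetric_group ::
  "('a, 'b) monoid_scheme \<Rightarrow> ('a \<Rightarrow> 'a \<Rightarrow> 'a) \<Rightarrow> ('a \<Rightarrow> 'a \<Rightarrow> 'a) \<Rightarrow> bool" where
  "symmetric_group G L R \<longleftrightarrow>
     group G \<and>
     (\<forall>u\<in>carrier G. \<forall>v\<in>carrier G. L u v \<in> carrier G \<and> R u v \<in> carrier G) \<and>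
     bij_betw (\<lambda>(u, v). (L u v, R u v)) (carrier G \<times> carrier G) (carrier G \<times> carrier G) \<and>
     (\<forall>u\<in>carrier G. \<forall>v\<in>carrier G. L (L u v) (R u v) = u \<and> R (L u v) (R u v) = v) \<and>
     (\<forall>a\<in>carrier G. L a \<one>\<^bsub>G\<^esub> = \<one>\<^bsub>G\<^esub> \<and> R a \<one>\<^bsub>G\<^esub> = a) \<and>
     (\<forall>u\<in>carrier G. L \<one>\<^bsub>G\<^esub> u = u \<and> R \<one>\<^bsub>G\<^esub> u = \<one>\<^bsub>G\<^esub>) \<and>
     (\<forall>a\<in>carrier G. \<forall>b\<in>carrier G. \<forall>u\<in>carrier G.
        L (a \<otimes>\<^bsub>G\<^esub> b) u = L a (L b u) \<and>
        R (a \<otimes>\<^bsub>G\<^esub> b) u = R a (L b u) \<otimes>\<^bsub>G\<^esub> R b u) \<and>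
     (\<forall>a\<in>carrier G. \<forall>u\<in>carrier G. \<forall>v\<in>carrier G.
        R a (u \<otimes>\<^bsub>G\<^esub> v) = R (R a u) v \<and>
        L a (u \<otimes>\<^bsub>G\<^esub> v) = L a u \<otimes>\<^bsub>G\<^esub> L (R a u) v) \<and>
     (\<forall>u\<in>carrier G. \<forall>v\<in>carrier G. u \<otimes>\<^bsub>G\<^esub> v = L u v \<otimes>\<^bsub>G\<^esub> R u v)"

definition trivial_solution :: "'a set \<Rightarrow> ('a \<Rightarrow> 'a \<Rightarrow> 'a) \<Rightarrow> ('a \<Rightarrow> 'a \<Rightarrow> 'a) \<Rightarrow> bool" where
  "trivial_solution X L R \<longleftrightarrow> (\<forall>a\<in>X. \<forall>b\<in>X. L a b = b \<and> R a b = a)"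

definition brace_plus :: "('a, 'b) monoid_scheme \<Rightarrow> ('a \<Rightarrow> 'a \<Rightarrow> 'a) \<Rightarrow> 'a \<Rightarrow> 'a \<Rightarrow> 'a" where
  "brace_plus G L a b = a \<otimes>\<^bsub>G\<^esub> L (inv\<^bsub>G\<^esub> a) b"

definition ret_rel :: "'a set \<Rightarrow> ('a \<Rightarrow> 'a \<Rightarrow> 'a) \<Rightarrow> ('a \<times> 'a) set" where
  "ret_rel X L = {(a, b). a \<in> X \<and> b \<in> X \<and> (\<forall>c\<in>X. L a c = L b c)}"

definition ret_carrier :: "'a set \<Rightarrow> ('a \<Rightarrow> 'a \<Rightarrow> 'a) \<Rightarrow> 'a set set" where
  "ret_carrier X L = X // ret_rel X L"

definition ret_lact :: "'a set \<Rightarrow> ('a \<Rightarrow> 'a \<Rightarrow> 'a) \<Rightarrow> 'a set \<Rightarrow> 'a set \<Rightarrow> 'a set" where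
  "ret_lact X L A B = ret_rel X L `` {L (SOME a. a \<in> A) (SOME b. b \<in> B)}"

definition ret_ract :: "'a set \<Rightarrow> ('a \<Rightarrow> 'a \<Rightarrow> 'a) \<Rightarrow> ('a \<Rightarrow> 'a \<Rightarrow> 'a) \<Rightarrow> 'a set \<Rightarrow> 'a set \<Rightarrow> 'a set" where
  "ret_ract X L R A B = ret_rel X L `` {R (SOME a. a \<in> A) (SOME b. b \<in> B)}"

text \<open>mpl = 2: the 2-fold iterated retraction has one element, while the 1-fold and 0-fold
  ones do not.  (The equivalence relation of the second retraction depends only on the
  induced left action of the first retraction.)\<close>
definition mpl_2 :: "'a set \<Rightarrow> ('a \<Rightarrow> 'a \<Rightarrow> 'a) \<Rightarrow> ('a \<Rightarrow> 'a \<Rightarrow> 'a) \<Rightarrow> bool" where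
  "mpl_2 X L R \<longleftrightarrow>
     card (ret_carrier (ret_carrier X L) (ret_lact X L)) = 1 \<and>
     card (ret_carrier X L) \<noteq> 1 \<and> card X \<noteq> 1"

end

theory Submission
  imports Defs
begin

text \<open>Write ^a b = L a b and a^b = R a b.  Involutivity of r exchanges (i) with (ii) and
  (iii) with (iv), and the identity ^a(uv) = ^a u \<cdot> ^(a^u) v shows that (ii) says exactly
  that every L_a is an automorphism.  Under (i) the identity ^(^x y) (x^y) = x becomes
  ^y (x^y) = x, i.e. R_y = L_(y^-1); dually (iv) gives L_x = R_(x^-1), and this links the
  conditions on L with those on R.  Raut follows because R_c = L_(c^-1) is then an
  automorphism commuting with every L_a, the image of a \<mapsto> L_a being abelian.

  The retraction relation L_a = L_b is compatible with the action: its classes are the cosets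
  of the kernel K of a \<mapsto> L_a, and every L_x maps K into itself (on K it is conjugation by x).
  Hence the second retraction is a single point iff ^a b and b always lie in the same class,
  which is (i); non-triviality excludes the smaller levels.\<close>

lemma equiv_ret_rel: "equiv X (ret_rel X L)"
  unfolding equiv_def refl_on_def sym_def trans_def ret_rel_def by auto

lemma card_quotient_eq_1_iff:
  assumes equiv: "equiv A r" and x0: "x0 \<in> A"
  shows "card (A // r) = 1 \<longleftrightarrow> (\<forall>x\<in>A. (x, x0) \<in> r)"
proof
  assume "card (A // r) = 1"
  then obtain Q where Q: "A // r = {Q}" by (rule card_1_singletonE)
  show "\<forall>x\<in>A. (x, x0) \<in> r"
  proof
    fix x assume x: "x \<in> A"
    have "r `` {x} = r `` {x0}" using Q x x0 by (metis quotientI singletonD)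
    then show "(x, x0) \<in> r" using eq_equiv_class_iff[OF equiv x x0] by simp
  qed
next
  assume "\<forall>x\<in>A. (x, x0) \<in> r"
  then have "r `` {x} = r `` {x0}" if "x \<in> A" for x
    using that equiv_class_eq[OF equiv] by blast
  then have "A // r = {r `` {x0}}" using x0 unfolding quotient_def by blast
  then show "card (A // r) = 1" by simp
qed

locale symmetric_grp =
  fixes G :: "('a, 'b) monoid_scheme" (structure) and L R :: "'a \<Rightarrow> 'a \<Rightarrow> 'a"
  assumes symmetric: "symmetric_group G L R"
begin

sublocale group G
  using symmetric unfolding symmetric_group_def by blast

lemma L_closed [simp]: "u \<in> carrier G \<Longrightarrow> v \<in> carrier G \<Longrightarrow> L u v \<in> carrier G"
  and R_closed [simp]: "u \<in> carrier G \<Longrightarrow> v \<in> carrier G \<Longrightarrow> R u v \<in> carrier G"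
  and involutive_L: "u \<in> carrier G \<Longrightarrow> v \<in> carrier G \<Longrightarrow> L (L u v) (R u v) = u"
  and involutive_R: "u \<in> carrier G \<Longrightarrow> v \<in> carrier G \<Longrightarrow> R (L u v) (R u v) = v"
  and L_one_right [simp]: "a \<in> carrier G \<Longrightarrow> L a \<one> = \<one>"
  and R_one_right [simp]: "a \<in> carrier G \<Longrightarrow> R a \<one> = a"
  and L_one_left [simp]: "a \<in> carrier G \<Longrightarrow> L \<one> a = a"
  and L_mult: "\<lbrakk>a \<in> carrier G; b \<in> carrier G; u \<in> carrier G\<rbrakk> \<Longrightarrow> L (a \<otimes> b) u = L a (L b u)"
  and R_mult: "\<lbrakk>a \<in> carrier G; u \<in> carrier G; v \<in> carrier G\<rbrakk> \<Longrightarrow> R a (u \<otimes> v) = R (R a u) v"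
  and L_mult_distrib:
    "\<lbrakk>a \<in> carrier G; u \<in> carrier G; v \<in> carrier G\<rbrakk> \<Longrightarrow> L a (u \<otimes> v) = L a u \<otimes> L (R a u) v"
  and mult_eq_L_R: "u \<in> carrier G \<Longrightarrow> v \<in> carrier G \<Longrightarrow> u \<otimes> v = L u v \<otimes> R u v"
  using symmetric unfolding symmetric_group_def by blast+

lemma L_inv_L: "a \<in> carrier G \<Longrightarrow> u \<in> carrier G \<Longrightarrow> L (inv a) (L a u) = u"
  by (metis L_mult L_one_left inv_closed l_inv)

lemma L_L_inv: "a \<in> carrier G \<Longrightarrow> u \<in> carrier G \<Longrightarrow> L a (L (inv a) u) = u"
  by (metis L_mult L_one_left inv_closed r_inv)

lemma R_R_inv: "a \<in> carrier G \<Longrightarrow> u \<in> carrier G \<Longrightarrow> R (R u a) (inv a) = u"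
  by (metis R_mult R_one_right inv_closed r_inv)

lemma R_inv_R: "a \<in> carrier G \<Longrightarrow> u \<in> carrier G \<Longrightarrow> R (R u (inv a)) a = u"
  by (metis R_mult R_one_right inv_closed l_inv)

lemma L_inv_cong:
  assumes "y \<in> carrier G" "y' \<in> carrier G" "\<forall>w\<in>carrier G. L y w = L y' w" "z \<in> carrier G"
  shows "L (inv y) z = L (inv y') z"
proof -
  have "L y' (L (inv y) z) = L y (L (inv y) z)" using assms by simp
  also have "\<dots> = z" using assms L_L_inv by simp
  finally have "L y' (L (inv y) z) = z" .
  then have "L (inv y') z = L (inv y') (L y' (L (inv y) z))" by simp
  also have "\<dots> = L (inv y) z" using assms L_inv_L by simp
  finally show ?thesis by simp
qed

lemma R_inv_cong:
  assumes "y \<in> carrier G" "y' \<in> carrier G" "\<forall>w\<in>carrier G. R w y = R w y'" "z \<in> carrier G"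
  shows "R z (inv y) = R z (inv y')"
proof -
  have "R (R z (inv y)) y' = z" using assms R_inv_R by (metis inv_closed R_closed)
  then have "R z (inv y') = R (R (R z (inv y)) y') (inv y')" by simp
  also have "\<dots> = R z (inv y)" using assms R_R_inv by simp
  finally show ?thesis by simp
qed

definition "L_invariant_under_L \<longleftrightarrow>
  (\<forall>a\<in>carrier G. \<forall>b\<in>carrier G. \<forall>x\<in>carrier G. L (L b a) x = L a x)"
definition "L_invariant_under_R \<longleftrightarrow>
  (\<forall>a\<in>carrier G. \<forall>b\<in>carrier G. \<forall>x\<in>carrier G. L (R a b) x = L a x)"
definition "R_invariant_under_L \<longleftrightarrow>
  (\<forall>a\<in>carrier G. \<forall>b\<in>carrier G. \<forall>x\<in>carrier G. R x (L b a) = R x a)"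
definition "R_invariant_under_R \<longleftrightarrow>
  (\<forall>a\<in>carrier G. \<forall>b\<in>carrier G. \<forall>x\<in>carrier G. R x (R a b) = R x a)"
definition "L_automorphic \<longleftrightarrow>
  (\<forall>a\<in>carrier G. \<forall>b\<in>carrier G. \<forall>c\<in>carrier G. L a (b \<otimes> c) = L a b \<otimes> L a c)"

lemma L_invariant_under_L_iff_R: "L_invariant_under_L \<longleftrightarrow> L_invariant_under_R"
proof
  assume inv: L_invariant_under_L
  show L_invariant_under_R unfolding L_invariant_under_R_def
  proof (intro ballI)
    fix a b x assume "a \<in> carrier G" "b \<in> carrier G" "x \<in> carrier G"
    then show "L (R a b) x = L a x"
      using inv[unfolded L_invariant_under_L_def, rule_format, of "R a b" "L a b" x] involutive_L
      by simp
  qed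
next
  assume inv: L_invariant_under_R
  show L_invariant_under_L unfolding L_invariant_under_L_def
  proof (intro ballI)
    fix a b x assume "a \<in> carrier G" "b \<in> carrier G" "x \<in> carrier G"
    then show "L (L b a) x = L a x"
      using inv[unfolded L_invariant_under_R_def, rule_format, of "L b a" "R b a" x] involutive_R
      by simp
  qed
qed

lemma R_invariant_under_L_iff_R: "R_invariant_under_L \<longleftrightarrow> R_invariant_under_R"
proof
  assume inv: R_invariant_under_L
  show R_invariant_under_R unfolding R_invariant_under_R_def
  proof (intro ballI)
    fix a b x assume "a \<in> carrier G" "b \<in> carrier G" "x \<in> carrier G"
    then show "R x (R a b) = R x a"
      using inv[unfolded R_invariant_under_L_def, rule_format, of "R a b" "L a b" x] involutive_L
      by simp
  qed
next
  assume inv: R_invariant_under_R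
  show R_invariant_under_L unfolding R_invariant_under_L_def
  proof (intro ballI)
    fix a b x assume "a \<in> carrier G" "b \<in> carrier G" "x \<in> carrier G"
    then show "R x (L b a) = R x a"
      using inv[unfolded R_invariant_under_R_def, rule_format, of "L b a" "R b a" x] involutive_R
      by simp
  qed
qed

lemma L_automorphic_iff_invariant_under_R: "L_automorphic \<longleftrightarrow> L_invariant_under_R"
proof
  assume "L_automorphic"
  then have "L a b \<otimes> L (R a b) x = L a b \<otimes> L a x"
    if "a \<in> carrier G" "b \<in> carrier G" "x \<in> carrier G" for a b x
    using that L_mult_distrib unfolding L_automorphic_def by simp
  then show "L_invariant_under_R"
    unfolding L_invariant_under_R_def by simp
qed (simp add: L_automorphic_def L_invariant_under_R_def L_mult_distrib)

lemma R_eq_L_inv: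
  assumes "L_invariant_under_L" "x \<in> carrier G" "y \<in> carrier G"
  shows "R x y = L (inv y) x"
proof -
  have "L y (R x y) = x"
    using assms involutive_L[of x y] unfolding L_invariant_under_L_def by simp
  then have "L (inv y) x = L (inv y) (L y (R x y))" by simp
  also have "\<dots> = R x y" using assms L_inv_L by simp
  finally show ?thesis by simp
qed

lemma L_eq_R_inv:
  assumes "R_invariant_under_R" "x \<in> carrier G" "y \<in> carrier G"
  shows "L x y = R y (inv x)"
proof -
  have "R (L x y) x = R (L x y) (R x y)"
    using assms unfolding R_invariant_under_R_def by simp
  then have "R (L x y) x = y" using assms involutive_R by simp
  then have "R y (inv x) = R (R (L x y) x) (inv x)" by simp
  also have "\<dots> = L x y" using assms R_R_inv by simp
  finally show ?thesis by simp
qed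

lemma L_invariant_imp_R_invariant: "L_invariant_under_L \<Longrightarrow> R_invariant_under_R"
  unfolding R_invariant_under_R_def
proof (intro ballI)
  fix a b x assume inv_L: L_invariant_under_L and abx: "a \<in> carrier G" "b \<in> carrier G" "x \<in> carrier G"
  have "R x (R a b) = L (inv (R a b)) x" using R_eq_L_inv inv_L abx by simp
  also have "\<dots> = L (inv a) x"
    using L_inv_cong[of "R a b" a x] inv_L abx L_invariant_under_L_iff_R
    unfolding L_invariant_under_R_def by simp
  also have "\<dots> = R x a" using R_eq_L_inv inv_L abx by simp
  finally show "R x (R a b) = R x a" .
qed

lemma R_invariant_imp_L_invariant: "R_invariant_under_R \<Longrightarrow> L_invariant_under_L"
  unfolding L_invariant_under_L_def
proof (intro ballI)
  fix a b x assume inv_R: R_invariant_under_R and abx: "a \<in> carrier G" "b \<in> carrier G" "x \<in> carrier G"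
  have "L (L b a) x = R x (inv (L b a))" using L_eq_R_inv inv_R abx by simp
  also have "\<dots> = R x (inv a)"
    using R_inv_cong[of "L b a" a x] inv_R abx R_invariant_under_L_iff_R
    unfolding R_invariant_under_L_def by simp
  also have "\<dots> = L a x" using L_eq_R_inv inv_R abx by simp
  finally show "L (L b a) x = L a x" .
qed

lemma lri:
  assumes "L_invariant_under_L" "a \<in> carrier G" "b \<in> carrier G"
  shows "R (L a b) a = b" "L a (R b a) = b"
proof -
  have "R_invariant_under_R" using assms(1) L_invariant_imp_R_invariant by blast
  then have "R (L a b) a = R (L a b) (R a b)"
    using assms unfolding R_invariant_under_R_def by simp
  then show "R (L a b) a = b" using involutive_R assms by simp
  have "L a (R b a) = L (L b a) (R b a)"
    using assms unfolding L_invariant_under_L_def by simp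
  then show "L a (R b a) = b" using involutive_L assms by simp
qed

lemma cyclic_conditions:
  assumes "L_invariant_under_L" "a \<in> carrier G" "b \<in> carrier G"
  shows "L (R b a) a = L b a" "R a (L a b) = R a b" "L (L a b) a = L b a" "R a (R b a) = R a b"
proof -
  have "L_invariant_under_R" "R_invariant_under_R" "R_invariant_under_L"
    using assms(1) L_invariant_under_L_iff_R L_invariant_imp_R_invariant R_invariant_under_L_iff_R
    by blast+
  with assms show "L (R b a) a = L b a" "R a (L a b) = R a b" "L (L a b) a = L b a" "R a (R b a) = R a b"
    unfolding L_invariant_under_L_def L_invariant_under_R_def
      R_invariant_under_L_def R_invariant_under_R_def by simp_all
qed

lemma L_mult_commute:
  assumes "L_invariant_under_L" "x \<in> carrier G" "y \<in> carrier G" "w \<in> carrier G"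
  shows "L (x \<otimes> y) w = L (y \<otimes> x) w"
proof -
  have "L (x \<otimes> y) w = L (L x y) (L (R x y) w)"
    using assms mult_eq_L_R[of x y] L_mult by simp
  also have "\<dots> = L y (L x w)"
    using assms L_invariant_under_L_iff_R
    unfolding L_invariant_under_L_def L_invariant_under_R_def by simp
  also have "\<dots> = L (y \<otimes> x) w" using assms L_mult by simp
  finally show ?thesis .
qed

lemma L_inv_distrib:
  assumes "L_automorphic" "c \<in> carrier G" "a \<in> carrier G"
  shows "L c (inv a) = inv (L c a)"
proof -
  have "L c (inv a) \<otimes> L c a = L c (inv a \<otimes> a)"
    using assms unfolding L_automorphic_def by (metis inv_closed)
  also have "\<dots> = \<one>" using assms by simp
  finally show ?thesis using assms inv_equality by simp
qed

lemma R_brace_plus: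
  assumes inv_L: "L_invariant_under_L" and abc: "a \<in> carrier G" "b \<in> carrier G" "c \<in> carrier G"
  shows "R (brace_plus G L a b) c = brace_plus G L (R a c) (R b c)"
proof -
  define c' where "c' = inv c"
  have c': "c' \<in> carrier G" using abc c'_def by simp
  have aut: "L_automorphic"
    using inv_L L_invariant_under_L_iff_R L_automorphic_iff_invariant_under_R by blast
  have "R (brace_plus G L a b) c = L c' (a \<otimes> L (inv a) b)"
    unfolding brace_plus_def using R_eq_L_inv[OF inv_L] abc c'_def by simp
  also have "\<dots> = L c' a \<otimes> L (c' \<otimes> inv a) b"
    using aut abc c' L_mult unfolding L_automorphic_def by simp
  also have "\<dots> = L c' a \<otimes> L (inv a) (L c' b)"
    using abc c' L_mult L_mult_commute[OF inv_L, of c' "inv a" b] by simp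
  also have "\<dots> = L c' a \<otimes> L (L c' (inv a)) (L c' b)"
    using abc c' inv_L unfolding L_invariant_under_L_def by simp
  also have "\<dots> = brace_plus G L (R a c) (R b c)"
    unfolding brace_plus_def using R_eq_L_inv[OF inv_L] L_inv_distrib[OF aut] abc c'_def by simp
  finally show ?thesis .
qed

abbreviation "retr \<equiv> ret_rel (carrier G) L"

lemma retr_iff:
  "(x, y) \<in> retr \<longleftrightarrow> x \<in> carrier G \<and> y \<in> carrier G \<and> (\<forall>c\<in>carrier G. L x c = L y c)"
  by (simp add: ret_rel_def)

lemma L_kernel_conj:
  assumes s: "s \<in> carrier G" "\<forall>z\<in>carrier G. L s z = z" and x: "x \<in> carrier G"
  shows "L x s = x \<otimes> s \<otimes> inv x"
proof -
  define t where "t = x \<otimes> s \<otimes> inv x"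
  have t: "t \<in> carrier G" using s x t_def by simp
  have ker_t: "L t z = z" if "z \<in> carrier G" for z
    using s x that t_def L_mult L_L_inv by simp
  then have "t \<otimes> x = x \<otimes> R t x" using mult_eq_L_R[of t x] t x by simp
  then have "R t x = inv x \<otimes> (t \<otimes> x)" using t x by (simp add: m_assoc[symmetric])
  also have "\<dots> = s" using s x t_def by (simp add: m_assoc[symmetric]) (simp add: m_assoc)
  finally have "R t x = s" .
  moreover have "L (L t x) (R t x) = t" using involutive_L t x by simp
  ultimately show ?thesis using ker_t t x t_def by simp
qed

lemma retr_L_compatible:
  assumes "(c, c') \<in> retr" "a \<in> carrier G"
  shows "(L a c, L a c') \<in> retr"
proof -
  have c: "c \<in> carrier G" "c' \<in> carrier G" and eq: "\<And>z. z \<in> carrier G \<Longrightarrow> L c' z = L c z"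
    using assms retr_iff by auto
  define s where "s = inv c \<otimes> c'"
  have s: "s \<in> carrier G" using c s_def by simp
  have ker_s: "\<forall>z\<in>carrier G. L s z = z"
    using c s_def eq L_mult L_inv_L by simp
  have c'_eq: "c' = c \<otimes> s" using c s_def by (simp add: m_assoc[symmetric])
  define x where "x = R a c"
  have x: "x \<in> carrier G" using x_def assms c by simp
  have ker_xs: "\<forall>z\<in>carrier G. L (L x s) z = z"
    using L_kernel_conj[OF s ker_s x] x s ker_s L_mult L_L_inv by simp
  have "L a c' = L a c \<otimes> L x s" using c'_eq L_mult_distrib x_def assms c s by simp
  then have "\<forall>z\<in>carrier G. L (L a c') z = L (L a c) z" using ker_xs L_mult assms c x s by simp
  then show ?thesis using retr_iff assms c by simp
qed

lemma ret_lact_classes: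
  assumes "a \<in> carrier G" "c \<in> carrier G"
  shows "ret_lact (carrier G) L (retr `` {a}) (retr `` {c}) = retr `` {L a c}"
proof -
  define a' where "a' = (SOME u. u \<in> retr `` {a})"
  define c' where "c' = (SOME u. u \<in> retr `` {c})"
  have "a \<in> retr `` {a}" "c \<in> retr `` {c}" using assms retr_iff by auto
  then have "a' \<in> retr `` {a}" "c' \<in> retr `` {c}"
    unfolding a'_def c'_def by (auto intro: someI)
  then have "(L a c, L a' c') \<in> retr"
    using retr_L_compatible assms retr_iff by fastforce
  then have "retr `` {L a' c'} = retr `` {L a c}"
    using equiv_class_eq[OF equiv_ret_rel] by metis
  then show ?thesis unfolding ret_lact_def a'_def c'_def .
qed

lemma L_invariant_under_L_iff_retr:
  "L_invariant_under_L \<longleftrightarrow> (\<forall>a\<in>carrier G. \<forall>b\<in>carrier G. (L b a, a) \<in> retr)"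
  unfolding L_invariant_under_L_def retr_iff by simp

lemma trivial_solution_iff_L_trivial:
  "trivial_solution (carrier G) L R \<longleftrightarrow> (\<forall>a\<in>carrier G. \<forall>b\<in>carrier G. L a b = b)"
proof
  assume L_triv: "\<forall>a\<in>carrier G. \<forall>b\<in>carrier G. L a b = b"
  have "R a b = a" if "a \<in> carrier G" "b \<in> carrier G" for a b
    using involutive_L[OF that] L_triv that by simp
  then show "trivial_solution (carrier G) L R"
    unfolding trivial_solution_def using L_triv by simp
qed (simp add: trivial_solution_def)

lemma card_retraction_eq_1_iff:
  "card (ret_carrier (carrier G) L) = 1 \<longleftrightarrow> trivial_solution (carrier G) L R"
  unfolding ret_carrier_def card_quotient_eq_1_iff[OF equiv_ret_rel one_closed]
    trivial_solution_iff_L_trivial retr_iff by simp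

lemma card_carrier_eq_1_imp_trivial:
  assumes "card (carrier G) = 1"
  shows "trivial_solution (carrier G) L R"
proof -
  obtain y where "carrier G = {y}" using assms by (rule card_1_singletonE)
  then have "b = \<one>" if "b \<in> carrier G" for b using that one_closed by auto
  then show ?thesis unfolding trivial_solution_iff_L_trivial by (metis L_one_right)
qed

lemma ret_rel_retraction_classes_iff:
  assumes "a \<in> carrier G" "a' \<in> carrier G"
  shows "(retr `` {a}, retr `` {a'}) \<in> ret_rel (carrier G // retr) (ret_lact (carrier G) L)
     \<longleftrightarrow> (\<forall>c\<in>carrier G. (L a c, L a' c) \<in> retr)"
proof -
  have "(\<forall>C\<in>carrier G // retr. ret_lact (carrier G) L (retr `` {a}) C
                            = ret_lact (carrier G) L (retr `` {a'}) C)
     \<longleftrightarrow> (\<forall>c\<in>carrier G. retr `` {L a c} = retr `` {L a' c})"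
    using assms ret_lact_classes unfolding quotient_def by auto
  also have "\<dots> \<longleftrightarrow> (\<forall>c\<in>carrier G. (L a c, L a' c) \<in> retr)"
    using assms by (simp add: eq_equiv_class_iff[OF equiv_ret_rel])
  moreover have "retr `` {a} \<in> carrier G // retr" "retr `` {a'} \<in> carrier G // retr"
    using assms by (simp_all add: quotientI)
  ultimately show ?thesis unfolding ret_rel_def[of "carrier G // retr"] by simp
qed

lemma second_retraction_point_iff:
  "card (ret_carrier (ret_carrier (carrier G) L) (ret_lact (carrier G) L)) = 1
     \<longleftrightarrow> L_invariant_under_L"
proof -
  have one_class: "retr `` {\<one>} \<in> carrier G // retr" by (rule quotientI) simp
  have "card (ret_carrier (ret_carrier (carrier G) L) (ret_lact (carrier G) L)) = 1
     \<longleftrightarrow> (\<forall>A\<in>carrier G // retr.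
            (A, retr `` {\<one>}) \<in> ret_rel (carrier G // retr) (ret_lact (carrier G) L))"
    unfolding ret_carrier_def by (rule card_quotient_eq_1_iff[OF equiv_ret_rel one_class])
  also have "\<dots> \<longleftrightarrow> (\<forall>a\<in>carrier G. \<forall>c\<in>carrier G. (L a c, c) \<in> retr)"
    using ret_rel_retraction_classes_iff unfolding quotient_def by auto
  also have "\<dots> \<longleftrightarrow> L_invariant_under_L"
    unfolding L_invariant_under_L_iff_retr by blast
  finally show ?thesis .
qed

lemma mpl_2_iff_L_invariant:
  assumes "\<not> trivial_solution (carrier G) L R"
  shows "mpl_2 (carrier G) L R \<longleftrightarrow> L_invariant_under_L"
  using assms second_retraction_point_iff card_retraction_eq_1_iff card_carrier_eq_1_imp_trivial
  unfolding mpl_2_def by blast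

end

theorem mainTheorem14:
  fixes G :: "('a, 'b) monoid_scheme" and L R :: "'a \<Rightarrow> 'a \<Rightarrow> 'a"
  assumes sg: "symmetric_group G L R"
    and nontriv: "\<not> trivial_solution (carrier G) L R"
  shows
    "(mpl_2 (carrier G) L R \<longleftrightarrow>
        (\<forall>a\<in>carrier G. \<forall>b\<in>carrier G. \<forall>c\<in>carrier G.
           L a (b \<otimes>\<^bsub>G\<^esub> c) = L a b \<otimes>\<^bsub>G\<^esub> L a c))
     \<and> (mpl_2 (carrier G) L R \<longleftrightarrow>
        (\<forall>a\<in>carrier G. \<forall>b\<in>carrier G. \<forall>x\<in>carrier G. L (L b a) x = L a x))
     \<and> (mpl_2 (carrier G) L R \<longleftrightarrow>
        (\<forall>a\<in>carrier G. \<forall>b\<in>carrier G. \<forall>x\<in>carrier G. L (R a b) x = L a x))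
     \<and> (mpl_2 (carrier G) L R \<longleftrightarrow>
        (\<forall>a\<in>carrier G. \<forall>b\<in>carrier G. \<forall>x\<in>carrier G. R x (L b a) = R x a))
     \<and> (mpl_2 (carrier G) L R \<longleftrightarrow>
        (\<forall>a\<in>carrier G. \<forall>b\<in>carrier G. \<forall>x\<in>carrier G. R x (R a b) = R x a))
     \<and> (mpl_2 (carrier G) L R \<longrightarrow>
          (\<forall>a\<in>carrier G. \<forall>b\<in>carrier G. R (L a b) a = b \<and> L a (R b a) = b)
        \<and> (\<forall>a\<in>carrier G. \<forall>b\<in>carrier G.
             L (R b a) a = L b a \<and> R a (L a b) = R a b \<and>
             L (L a b) a = L b a \<and> R a (R b a) = R a b)
        \<and> (\<forall>a\<in>carrier G. \<forall>b\<in>carrier G. \<forall>c\<in>carrier G.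
             R (brace_plus G L a b) c = brace_plus G L (R a c) (R b c)))"
proof -
  interpret symmetric_grp G L R by (rule symmetric_grp.intro[OF sg])
  have mpl: "mpl_2 (carrier G) L R \<longleftrightarrow> L_invariant_under_L"
    using mpl_2_iff_L_invariant nontriv by blast
  have LR: "L_invariant_under_L \<longleftrightarrow> R_invariant_under_R"
    using L_invariant_imp_R_invariant R_invariant_imp_L_invariant by blast
  have consequences: "L_invariant_under_L \<Longrightarrow>
          (\<forall>a\<in>carrier G. \<forall>b\<in>carrier G. R (L a b) a = b \<and> L a (R b a) = b)
        \<and> (\<forall>a\<in>carrier G. \<forall>b\<in>carrier G.
             L (R b a) a = L b a \<and> R a (L a b) = R a b \<and>
             L (L a b) a = L b a \<and> R a (R b a) = R a b)
        \<and> (\<forall>a\<in>carrier G. \<forall>b\<in>carrier G. \<forall>c\<in>carrier G.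
             R (brace_plus G L a b) c = brace_plus G L (R a c) (R b c))"
    by (simp add: lri cyclic_conditions R_brace_plus)
  show ?thesis
    apply (fold L_automorphic_def L_invariant_under_L_def L_invariant_under_R_def
        R_invariant_under_L_def R_invariant_under_R_def)
    using mpl LR L_invariant_under_L_iff_R R_invariant_under_L_iff_R
      L_automorphic_iff_invariant_under_R consequences by blast
qed

end
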